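(* Fix a device $n$, a control parameter $V\ge0$ and a frame $k$. For any feasible decisions $0\le\gamma_n^k\le1$ and $0\le p_n^t\le\overline{P}_n$ for all $t\in\mathcal{T}_k=\{kT,\dots,(k+1)T-1\}$, $$\mathcal{D}_n(Q_n^{kT})\le\beta_2T+\mathbb{E}\Big\{\sum_{t\in\mathcal{T}_k}VX_n^t+Q_n^{kT}(E_n^t-\overline{E}_n)\,\Big|\,Q_n^{kT}\Big\},$$ where $\beta_2=\beta_1+\frac{(T-1)[(E_{n,\max}-\overline{E}_n)E_{n,\max}+\overline{E}_n^2]}{2}$ and $\beta_1=\frac12(E_{n,\max}^2+\overline{E}_n^2)$.
   Context: Device $n$ in a federated learning system consumes energy $E_n^t\ge0$ in slot $t$ (computation plus communication energy, determined by the freezing percentage $\gamma_n^k$ of the current frame and the transmit power $p_n^t$), and $E_{n,\max}$ is an upper bound with $E_n^t\le E_{n,\max}$ for all $t$. $\overline{E}_n>0$ is its average energy budget and $\overline{P}_n$ its peak power. $X_n^t=\lambda\mathbb{1}_n^tB_n(\gamma_n^k-1)$ is the per-slot convergence-error term, with constant $\lambda>0$, data size $B_n$, and success indicator $\mathbb{1}_n^t\in\{0,1\}$. The virtual energy-deficit queue evolves as $Q_n^{t+1}=\max\{Q_n^t+E_n^t-\overline{E}_n,0\}$ with $Q_n^0=0$. Slots are grouped into frames of $T$ slots. The $T$-slot conditional Lyapunov drift is $\Delta_{n,T}(Q_n^t)=\mathbb{E}\{\frac12(Q_n^{t+T})^2-\frac12(Q_n^t)^2\mid Q_n^t\}$,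 and the drift-plus-penalty of frame $k$ is $\mathcal{D}_n(Q_n^{kT})=\Delta_{n,T}(Q_n^{kT})+V\mathbb{E}\{\sum_{t\in\mathcal{T}_k}X_n^t\mid Q_n^{kT}\}$. Expectations are over channel randomness. *)

theory Defs
  imports "HOL-Probability.Probability"
begin

fun vqueue :: "(nat \<Rightarrow> real) \<Rightarrow> real \<Rightarrow> nat \<Rightarrow> real" where
  "vqueue E Ebar 0 = 0"
| "vqueue E Ebar (Suc t) = max (vqueue E Ebar t + E t - Ebar) 0"

definition frame_slots :: "nat \<Rightarrow> nat \<Rightarrow> nat set" where
  "frame_slots T k = {k * T ..< (k + 1) * T}"

definition gen_sigma :: "'a measure \<Rightarrow> ('a \<Rightarrow> real) \<Rightarrow> 'a measure" where
  "gen_sigma M Y = vimage_algebra (space M) Y borel"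

definition beta1 :: "real \<Rightarrow> real \<Rightarrow> real" where
  "beta1 Emax Ebar = (Emax\<^sup>2 + Ebar\<^sup>2) / 2"

definition beta2 :: "nat \<Rightarrow> real \<Rightarrow> real \<Rightarrow> real" where
  "beta2 T Emax Ebar = beta1 Emax Ebar
     + (real T - 1) * ((Emax - Ebar) * Emax + Ebar\<^sup>2) / 2"

end

theory Submission
  imports Defs
begin

(* Along every sample path Q^(t+1) <= |Q^t + E^t - Ebar|, so one slot raises (Q^t)^2/2 by at
   most beta1 + Q^t (E^t - Ebar).  Within a frame, Q^t is replaced by Q^(kT): in j slots the
   queue rises by at most j Emax and falls by at most j Ebar, so the error
   (Q^(kT+j) - Q^(kT)) (E^t - Ebar) is at most j ((Emax - Ebar) Emax + Ebar^2), and summing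
   over j < T produces the (T - 1)/2 term of beta2.  Conditioning on Q^(kT) preserves the
   resulting pathwise inequality by linearity and monotonicity of conditional expectation;
   in particular no property of the power decisions, of V or of T is needed. *)

lemma vqueue_nonneg: "0 \<le> vqueue e Eb t"
  by (cases t) auto

lemma vqueue_add_le:
  assumes "\<And>t. e t \<le> Emax" and "0 \<le> Emax" and "0 \<le> Eb"
  shows "vqueue e Eb (n + j) \<le> vqueue e Eb n + real j * Emax"
proof (induction j)
  case (Suc j)
  have "vqueue e Eb (n + Suc j) \<le> vqueue e Eb (n + j) + Emax"
    using assms(1)[of "n + j"] assms(2,3) vqueue_nonneg[of e Eb "n + j"] by auto
  with Suc show ?case by (simp add: algebra_simps)
qed simp

lemma vqueue_le:
  assumes "\<And>t. e t \<le> Emax" and "0 \<le> Emax" and "0 \<le> Eb"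
  shows "vqueue e Eb t \<le> real t * Emax"
  using vqueue_add_le[of e Emax Eb 0 t] assms by simp

lemma vqueue_add_ge:
  assumes "\<And>t. 0 \<le> e t"
  shows "vqueue e Eb n - real j * Eb \<le> vqueue e Eb (n + j)"
proof (induction j)
  case (Suc j)
  have "vqueue e Eb (n + j) + e (n + j) - Eb \<le> vqueue e Eb (n + Suc j)"
    by simp
  with Suc assms[of "n + j"] show ?case by (simp add: algebra_simps)
qed simp

lemma vqueue_eq_0:
  assumes "\<And>t. e t \<le> Eb"
  shows "vqueue e Eb t = 0"
  using assms by (induction t) auto

lemma vqueue_increment_mult_le:
  assumes e: "\<And>t. 0 \<le> e t \<and> e t \<le> Emax" and "0 \<le> Eb"
  shows "(vqueue e Eb (n + j) - vqueue e Eb n) * (e m - Eb)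
           \<le> real j * ((Emax - Eb) * Emax + Eb\<^sup>2)"
proof (cases "Eb \<le> Emax")
  case False
  have "(Emax - Eb) * Emax + Eb\<^sup>2 = (Emax - Eb / 2)\<^sup>2 + 3 / 4 * Eb\<^sup>2"
    by (simp add: power2_eq_square algebra_simps)
  then have "0 \<le> (Emax - Eb) * Emax + Eb\<^sup>2"
    by simp
  moreover have "vqueue e Eb t = 0" for t
    using False e by (intro vqueue_eq_0) (meson le_cases order_trans)
  ultimately show ?thesis
    by simp
next
  case True
  define D where "D = vqueue e Eb (n + j) - vqueue e Eb n"
  have "0 \<le> Emax" and "0 \<le> e m" and "e m \<le> Emax"
    using e[of m] by auto
  have D_le: "D \<le> real j * Emax"
    unfolding D_def using vqueue_add_le[of e Emax Eb n j] e \<open>0 \<le> Emax\<close> \<open>0 \<le> Eb\<close> by auto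
  have D_ge: "- D \<le> real j * Eb"
    unfolding D_def using vqueue_add_ge[of e Eb n j] e by auto
  have "D * (e m - Eb) \<le> real j * ((Emax - Eb) * Emax) + real j * Eb\<^sup>2"
  proof (cases "Eb \<le> e m")
    case True
    have "D * (e m - Eb) \<le> (real j * Emax) * (e m - Eb)"
      using D_le True by (intro mult_right_mono) auto
    also have "\<dots> \<le> (real j * Emax) * (Emax - Eb)"
      using \<open>e m \<le> Emax\<close> \<open>0 \<le> Emax\<close> by (intro mult_left_mono) auto
    finally have "D * (e m - Eb) \<le> real j * ((Emax - Eb) * Emax)"
      by (simp add: algebra_simps)
    moreover have "0 \<le> real j * Eb\<^sup>2"
      by simp
    ultimately show ?thesis
      by linarith
  next
    case False
    have "D * (e m - Eb) = (- D) * (Eb - e m)"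
      by (simp add: algebra_simps)
    also have "\<dots> \<le> (real j * Eb) * (Eb - e m)"
      using D_ge False by (intro mult_right_mono) auto
    also have "\<dots> \<le> (real j * Eb) * Eb"
      using \<open>0 \<le> e m\<close> \<open>0 \<le> Eb\<close> by (intro mult_left_mono) auto
    finally have "D * (e m - Eb) \<le> real j * Eb\<^sup>2"
      by (simp add: power2_eq_square algebra_simps)
    moreover have "0 \<le> real j * ((Emax - Eb) * Emax)"
      using True \<open>0 \<le> Emax\<close> by simp
    ultimately show ?thesis
      by linarith
  qed
  then show ?thesis
    unfolding D_def by (simp add: algebra_simps)
qed

lemma vqueue_square_Suc_le:
  assumes "0 \<le> e t" and "e t \<le> Emax" and "0 \<le> Eb"
  shows "(vqueue e Eb (Suc t))\<^sup>2 / 2 - (vqueue e Eb t)\<^sup>2 / 2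
           \<le> beta1 Emax Eb + vqueue e Eb t * (e t - Eb)"
proof -
  define q d where "q = vqueue e Eb t" and "d = e t - Eb"
  have d_sq: "d\<^sup>2 \<le> Emax\<^sup>2 + Eb\<^sup>2"
    using assms unfolding d_def by (smt (verit) mult_nonneg_nonneg power2_diff power_mono)
  have "(vqueue e Eb (Suc t))\<^sup>2 \<le> (q + d)\<^sup>2"
    by (cases "0 \<le> q + d") (auto simp: q_def d_def)
  then have "(vqueue e Eb (Suc t))\<^sup>2 / 2 - q\<^sup>2 / 2 \<le> (q + d)\<^sup>2 / 2 - q\<^sup>2 / 2"
    by simp
  also have "\<dots> = q * d + d\<^sup>2 / 2"
    by (simp add: power2_sum field_simps)
  also have "\<dots> \<le> q * d + (Emax\<^sup>2 + Eb\<^sup>2) / 2"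
    using d_sq by simp
  finally show ?thesis
    by (simp add: q_def d_def beta1_def)
qed

lemma vqueue_square_drift_le:
  assumes e: "\<And>t. 0 \<le> e t \<and> e t \<le> Emax" and "0 \<le> Eb"
  shows "(vqueue e Eb (n + j))\<^sup>2 / 2 - (vqueue e Eb n)\<^sup>2 / 2
           \<le> beta2 j Emax Eb * real j + (\<Sum>t\<in>{n..<n + j}. vqueue e Eb n * (e t - Eb))"
proof (induction j)
  case (Suc j)
  define q d where "q = vqueue e Eb" and "d = e (n + j) - Eb"
  have "(q (Suc (n + j)))\<^sup>2 / 2 - (q (n + j))\<^sup>2 / 2 \<le> beta1 Emax Eb + q (n + j) * d"
    unfolding q_def d_def using e[of "n + j"] \<open>0 \<le> Eb\<close> by (intro vqueue_square_Suc_le) auto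
  moreover have "(q (n + j) - q n) * d \<le> real j * ((Emax - Eb) * Emax + Eb\<^sup>2)"
    unfolding q_def d_def using e \<open>0 \<le> Eb\<close> by (rule vqueue_increment_mult_le)
  moreover have "q (n + j) * d = q n * d + (q (n + j) - q n) * d"
    by (simp add: algebra_simps)
  ultimately have "(q (Suc (n + j)))\<^sup>2 / 2 - (q n)\<^sup>2 / 2
      \<le> beta2 j Emax Eb * real j + (\<Sum>t\<in>{n..<n + j}. q n * (e t - Eb))
        + beta1 Emax Eb + real j * ((Emax - Eb) * Emax + Eb\<^sup>2) + q n * d"
    using Suc unfolding q_def[symmetric] by linarith
  also have "\<dots> = beta2 (Suc j) Emax Eb * real (Suc j) + (\<Sum>t\<in>{n..<n + Suc j}. q n * (e t - Eb))"
    by (simp add: d_def beta2_def field_simps)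
  finally show ?case
    by (simp add: q_def)
qed simp

lemma frame_slots_eq: "frame_slots T k = {k * T..<k * T + T}"
  by (simp add: frame_slots_def algebra_simps)

lemma vqueue_drift_plus_penalty_le:
  assumes "\<And>t. 0 \<le> e t \<and> e t \<le> Emax" and "0 \<le> Eb"
  shows "(vqueue e Eb (k * T + T))\<^sup>2 / 2 - (vqueue e Eb (k * T))\<^sup>2 / 2
           + V * (\<Sum>t\<in>frame_slots T k. x t)
         \<le> beta2 T Emax Eb * real T
           + (\<Sum>t\<in>frame_slots T k. V * x t + vqueue e Eb (k * T) * (e t - Eb))"
  using vqueue_square_drift_le[of e Emax Eb "k * T" T] assms
  by (simp add: frame_slots_eq sum.distrib sum_distrib_left)

lemma (in finite_measure) integrable_mult_bounded:
  fixes f g :: "'a \<Rightarrow> real"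
  assumes [measurable]: "f \<in> borel_measurable M" "g \<in> borel_measurable M"
    and "\<And>x. x \<in> space M \<Longrightarrow> \<bar>f x\<bar> \<le> a" and "\<And>x. x \<in> space M \<Longrightarrow> \<bar>g x\<bar> \<le> b"
  shows "integrable M (\<lambda>x. f x * g x)"
proof (rule integrable_const_bound[where B = "a * b"])
  show "AE x in M. norm (f x * g x) \<le> a * b"
    using assms(3,4) by (intro AE_I2) (auto simp: abs_mult intro!: mult_mono order_trans[OF abs_ge_zero])
qed measurable

lemma borel_measurable_vqueue:
  assumes [measurable]: "\<And>t. E t \<in> borel_measurable M"
  shows "(\<lambda>\<omega>. vqueue (\<lambda>s. E s \<omega>) Eb t) \<in> borel_measurable M"
proof (induction t)
  case (Suc t)
  then show ?case
    by simp measurable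
qed simp

lemma finite_measure_subalgebra_gen_sigma:
  assumes "finite_measure M" and "Y \<in> borel_measurable M"
  shows "finite_measure_subalgebra M (gen_sigma M Y)"
  unfolding finite_measure_subalgebra_def finite_measure_subalgebra_axioms_def
    subalgebra_def gen_sigma_def
  using assms(1) sets_image_in_sets[OF _ assms(2)] by auto

lemma (in sigma_finite_subalgebra) real_cond_exp_add_cmult_le:
  assumes [measurable]: "integrable M f" "integrable M g" "integrable M h"
    and "AE x in M. f x + c * g x \<le> b + h x"
  shows "AE x in M. real_cond_exp M F f x + c * real_cond_exp M F g x \<le> b + real_cond_exp M F h x"
proof -
  have "AE x in M. real_cond_exp M F (\<lambda>x. f x + c * g x - h x) x \<le> b"
    by (intro real_cond_exp_le_c) (use assms in auto)
  moreover have "AE x in M. real_cond_exp M F (\<lambda>x. f x + c * g x - h x) x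
      = real_cond_exp M F (\<lambda>x. f x + c * g x) x - real_cond_exp M F h x"
    by (intro real_cond_exp_diff) (use assms in auto)
  moreover have "AE x in M. real_cond_exp M F (\<lambda>x. f x + c * g x) x
      = real_cond_exp M F f x + real_cond_exp M F (\<lambda>x. c * g x) x"
    by (intro real_cond_exp_add) (use assms in auto)
  moreover have "AE x in M. real_cond_exp M F (\<lambda>x. c * g x) x = c * real_cond_exp M F g x"
    by (intro real_cond_exp_cmult) (use assms in auto)
  ultimately show ?thesis
    by eventually_elim simp
qed

theorem lemma3:
  fixes M :: "'a measure"
    and E :: "nat \<Rightarrow> 'a \<Rightarrow> real"       \<comment> \<open>energy E_n^t(\<omega>)\<close>
    and ind :: "nat \<Rightarrow> 'a \<Rightarrow> real"     \<comment> \<open>success indicator 1_n^t(\<omega>)\<close>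
    and \<gamma> :: "'a \<Rightarrow> real"              \<comment> \<open>freezing percentage of frame k\<close>
    and p :: "nat \<Rightarrow> 'a \<Rightarrow> real"       \<comment> \<open>transmit power p_n^t\<close>
    and Emax Ebar Pbar lam B V :: real
    and T k :: nat
  assumes "prob_space M"
    and E_meas: "\<And>t. E t \<in> borel_measurable M"
    and E_bnd: "\<And>t \<omega>. \<omega> \<in> space M \<Longrightarrow> 0 \<le> E t \<omega> \<and> E t \<omega> \<le> Emax"
    and ind_meas: "\<And>t. ind t \<in> borel_measurable M"
    and ind_01: "\<And>t \<omega>. \<omega> \<in> space M \<Longrightarrow> ind t \<omega> \<in> {0, 1}"
    and \<gamma>_meas: "\<gamma> \<in> borel_measurable M"
    and \<gamma>_feas: "\<And>\<omega>. \<omega> \<in> space M \<Longrightarrow> 0 \<le> \<gamma> \<omega> \<and> \<gamma> \<omega> \<le> 1"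
    and p_meas: "\<And>t. p t \<in> borel_measurable M"
    and p_feas: "\<And>t \<omega>. t \<in> frame_slots T k \<Longrightarrow> \<omega> \<in> space M \<Longrightarrow> 0 \<le> p t \<omega> \<and> p t \<omega> \<le> Pbar"
    and "Ebar > 0" and "lam > 0" and "B \<ge> 0" and "V \<ge> 0" and "T \<ge> 1"
  shows
    "let Q = (\<lambda>t \<omega>. vqueue (\<lambda>s. E s \<omega>) Ebar t);
         X = (\<lambda>t \<omega>. lam * ind t \<omega> * B * (\<gamma> \<omega> - 1));
         F = gen_sigma M (Q (k * T));
         D = (\<lambda>\<omega>. real_cond_exp M F
                   (\<lambda>\<omega>. (Q (k * T + T) \<omega>)\<^sup>2 / 2 - (Q (k * T) \<omega>)\<^sup>2 / 2) \<omega>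
               + V * real_cond_exp M F (\<lambda>\<omega>. \<Sum>t\<in>frame_slots T k. X t \<omega>) \<omega>)
     in AE \<omega> in M. D \<omega> \<le> beta2 T Emax Ebar * real T
          + real_cond_exp M F
              (\<lambda>\<omega>. \<Sum>t\<in>frame_slots T k. V * X t \<omega> + Q (k * T) \<omega> * (E t \<omega> - Ebar)) \<omega>"
proof -
  interpret prob_space M by fact
  define Q where "Q = (\<lambda>t \<omega>. vqueue (\<lambda>s. E s \<omega>) Ebar t)"
  define X where "X = (\<lambda>t \<omega>. lam * ind t \<omega> * B * (\<gamma> \<omega> - 1))"
  define F where "F = gen_sigma M (Q (k * T))"
  note [measurable] = E_meas ind_meas \<gamma>_meas
  have [measurable]: "Q t \<in> borel_measurable M" for t
    unfolding Q_def using E_meas by (rule borel_measurable_vqueue)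
  interpret finite_measure_subalgebra M F
    unfolding F_def by (rule finite_measure_subalgebra_gen_sigma) (simp_all add: finite_measure_axioms)
  have Q_bnd: "\<bar>Q t \<omega>\<bar> \<le> real t * Emax" if "\<omega> \<in> space M" for t \<omega>
    using vqueue_le[of "\<lambda>s. E s \<omega>" Emax Ebar t] vqueue_nonneg[of "\<lambda>s. E s \<omega>" Ebar t]
      E_bnd[OF that] \<open>Ebar > 0\<close> by (fastforce simp: Q_def)
  have E_dev: "\<bar>E t \<omega> - Ebar\<bar> \<le> Emax + Ebar" if "\<omega> \<in> space M" for t \<omega>
    using E_bnd[OF that, of t] \<open>Ebar > 0\<close> by auto
  have ind_bnd: "\<bar>ind t \<omega>\<bar> \<le> 1" if "\<omega> \<in> space M" for t \<omega>
    using ind_01[OF that, of t] by auto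
  have "integrable M (\<lambda>\<omega>. (Q t \<omega>)\<^sup>2)" for t
    unfolding power2_eq_square using Q_bnd by (intro integrable_mult_bounded) auto
  moreover have "integrable M (X t)" for t
    unfolding X_def using ind_bnd \<gamma>_feas \<open>lam > 0\<close> \<open>B \<ge> 0\<close>
    by (intro integrable_mult_bounded[where a = "lam * B" and b = 1])
      (auto simp: abs_mult intro: mult_left_le_one_le)
  moreover have "integrable M (\<lambda>\<omega>. Q (k * T) \<omega> * (E t \<omega> - Ebar))" for t
    using Q_bnd E_dev by (intro integrable_mult_bounded) auto
  moreover have "(Q (k * T + T) \<omega>)\<^sup>2 / 2 - (Q (k * T) \<omega>)\<^sup>2 / 2
      + V * (\<Sum>t\<in>frame_slots T k. X t \<omega>)
      \<le> beta2 T Emax Ebar * real T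
      + (\<Sum>t\<in>frame_slots T k. V * X t \<omega> + Q (k * T) \<omega> * (E t \<omega> - Ebar))"
    if "\<omega> \<in> space M" for \<omega>
    unfolding Q_def using E_bnd[OF that] \<open>Ebar > 0\<close> by (intro vqueue_drift_plus_penalty_le) auto
  ultimately show ?thesis
    unfolding Let_def Q_def[symmetric] X_def[symmetric] F_def[symmetric]
    by (intro real_cond_exp_add_cmult_le) auto
qed

end
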